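(* Let $n\ge2$, let $X\subset\mathbb{R}^n$ be finite with the Euclidean metric $d$, let $k\in\mathbb{N}$, $Y\subset X$ and $\epsilon>0$. If $p,q\in J(Y,\epsilon)$, then $\rho^{F(Y,\epsilon)}(p,q)=\rho^Y(p,q)$.
   Context: DBSCAN$^*$: for $Y\subset X$, $\mathcal{C}(Y,\epsilon)=\{p\in Y:|\{y\in Y:d(p,y)\le\epsilon\}|>k\}$ (core points), $\mathcal{N}(Y,\epsilon)=Y\setminus\mathcal{C}(Y,\epsilon)$ (noise points), and $\mathcal{D}^*(Y,\epsilon)$ is the set of vertex sets of the connected components of the graph with vertex set $\mathcal{C}(Y,\epsilon)$ and an edge between distinct $p,q$ whenever $d(p,q)\le\epsilon$. Reachability: for $Z\subset X$ and $p\in Z$, $\operatorname{core}^Z_k(p)$ is the distance from $p$ to a $k$-th nearest neighbour of $p$ in $Z$ (the $k$-th smallest value of $d(p,z)$, $z\in Z\setminus\{p\}$, counted with multiplicity), and $\rho^Z(p,q)=\max\{\operatorname{core}^Z_k(p),\operatorname{core}^Z_k(q),d(p,q)\}$ for $p\ne q$, $\rho^Z(p,p)=0$. Cubes: $\mathcal{Q}=\mathcal{Q}(\epsilon)$ is the collection of closed cubes $\{x\in\mathbb{R}^n: j_i\frac{\epsilon}{2\sqrt n}\le x_i\le (j_i+1)\frac{\epsilon}{2\sqrt n}\}$, $j\in\mathbb{Z}^n$; $S^m=\{x:\max_i|x_i-s_i|\le m\frac{\epsilon}{2\sqrt n}\text{ for some }s\in S\}$; $\mathcal{I}(B)=\{S\in\mathcal{Q}:S\cap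 B\neq\emptyset\}$. For $A\subset X$, $S\in\mathcal{I}(A)$ is an interior cube of $A$ if $S^1\cap X\subset A$ and every $T\in\mathcal{Q}$ with $T\subset S^1$ lies in $\mathcal{I}(A)$, otherwise a boundary cube; $\partial A$ is the union of boundary cubes. For $Z\subset\mathbb{R}^n$ and integer $N\ge0$, $Z^N=\bigcup_{S\in\mathcal{I}(Z)}S^N$ and $Z^N_C=Z^N\cap C$. $\mathfrak{n}$, $\mathfrak{m}$ are the smallest integers with $\mathfrak{n}\ge\sqrt n-1$, $\mathfrak{m}\ge2\sqrt n$, and $\mathfrak{N}=\mathfrak{n}+\mathfrak{m}$. Define $J(Y,\epsilon)=\bigcup_{C\in\mathcal{D}^*(Y,\epsilon)}(\partial C)^{\mathfrak{n}}_C\cup\mathcal{N}(Y,\epsilon)$ and $F(Y,\epsilon)=\bigcup_{C\in\mathcal{D}^*(Y,\epsilon)}(\partial C)^{\mathfrak{N}}_C\cup\mathcal{N}(Y,\epsilon)$, with cubes taken in $\mathcal{Q}(\epsilon)$. *)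

theory Defs
  imports "HOL-Analysis.Analysis" "HOL-Library.Multiset"
begin

definition core_points :: "nat \<Rightarrow> real \<Rightarrow> ('a::metric_space) set \<Rightarrow> 'a set" where
  "core_points k \<epsilon> Y = {p \<in> Y. card {y \<in> Y. dist p y \<le> \<epsilon>} > k}"

definition noise_points :: "nat \<Rightarrow> real \<Rightarrow> ('a::metric_space) set \<Rightarrow> 'a set" where
  "noise_points k \<epsilon> Y = Y - core_points k \<epsilon> Y"

definition eps_edges :: "nat \<Rightarrow> real \<Rightarrow> ('a::metric_space) set \<Rightarrow> ('a \<times> 'a) set" where
  "eps_edges k \<epsilon> Y = {(p, q). p \<in> core_points k \<epsilon> Y \<and> q \<in> core_points k \<epsilon> Y
       \<and> p \<noteq> q \<and> dist p q \<le> \<epsilon>}"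

definition dbscan_clusters :: "nat \<Rightarrow> real \<Rightarrow> ('a::metric_space) set \<Rightarrow> 'a set set" where
  "dbscan_clusters k \<epsilon> Y =
     {{q. (p, q) \<in> (eps_edges k \<epsilon> Y)\<^sup>*} | p. p \<in> core_points k \<epsilon> Y}"

text \<open>k-th smallest of the distances d(p,z), z in Z - {p}, counted with multiplicity.
  Convention: 0 if k = 0, and \<infinity> if fewer than k such points exist.\<close>
definition core_dist :: "nat \<Rightarrow> ('a::metric_space) set \<Rightarrow> 'a \<Rightarrow> ereal" where
  "core_dist k Z p =
     (let L = sorted_list_of_multiset (image_mset (dist p) (mset_set (Z - {p})))
      in if k = 0 then 0 else if k \<le> length L then ereal (L ! (k - 1)) else \<infinity>)"

definition reach :: "nat \<Rightarrow> ('a::metric_space) set \<Rightarrow> 'a \<Rightarrow> 'a \<Rightarrow> ereal" where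
  "reach k Z p q =
     (if p = q then 0 else max (core_dist k Z p) (max (core_dist k Z q) (ereal (dist p q))))"

definition cube_side :: "real \<Rightarrow> nat \<Rightarrow> real" where
  "cube_side \<epsilon> n = \<epsilon> / (2 * sqrt (real n))"

definition grid_cube :: "real \<Rightarrow> ('n::finite \<Rightarrow> int) \<Rightarrow> (real ^ 'n) set" where
  "grid_cube \<epsilon> j = {x. \<forall>i. of_int (j i) * cube_side \<epsilon> CARD('n) \<le> x $ i
                          \<and> x $ i \<le> (of_int (j i) + 1) * cube_side \<epsilon> CARD('n)}"

definition cubes :: "real \<Rightarrow> (real ^ 'n::finite) set set" where
  "cubes \<epsilon> = range (grid_cube \<epsilon>)"

definition thicken :: "real \<Rightarrow> nat \<Rightarrow> (real ^ 'n::finite) set \<Rightarrow> (real ^ 'n) set" where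
  "thicken \<epsilon> m S = {x. \<exists>s\<in>S. \<forall>i. \<bar>x $ i - s $ i\<bar> \<le> real m * cube_side \<epsilon> CARD('n)}"

definition meet_cubes :: "real \<Rightarrow> (real ^ 'n::finite) set \<Rightarrow> (real ^ 'n) set set" where
  "meet_cubes \<epsilon> B = {S \<in> cubes \<epsilon>. S \<inter> B \<noteq> {}}"

definition interior_cube ::
  "(real ^ 'n::finite) set \<Rightarrow> real \<Rightarrow> (real ^ 'n) set \<Rightarrow> (real ^ 'n) set \<Rightarrow> bool" where
  "interior_cube X \<epsilon> A S \<longleftrightarrow> S \<in> meet_cubes \<epsilon> A \<and> thicken \<epsilon> 1 S \<inter> X \<subseteq> A
     \<and> (\<forall>T \<in> cubes \<epsilon>. T \<subseteq> thicken \<epsilon> 1 S \<longrightarrow> T \<in> meet_cubes \<epsilon> A)"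

definition boundary_set ::
  "(real ^ 'n::finite) set \<Rightarrow> real \<Rightarrow> (real ^ 'n) set \<Rightarrow> (real ^ 'n) set" where
  "boundary_set X \<epsilon> A = \<Union>{S \<in> meet_cubes \<epsilon> A. \<not> interior_cube X \<epsilon> A S}"

definition nbhd :: "real \<Rightarrow> nat \<Rightarrow> (real ^ 'n::finite) set \<Rightarrow> (real ^ 'n) set" where
  "nbhd \<epsilon> N Z = \<Union>{thicken \<epsilon> N S | S. S \<in> meet_cubes \<epsilon> Z}"

definition frak_n :: "nat \<Rightarrow> nat" where
  "frak_n n = nat \<lceil>sqrt (real n) - 1\<rceil>"

definition frak_m :: "nat \<Rightarrow> nat" where
  "frak_m n = nat \<lceil>2 * sqrt (real n)\<rceil>"

definition frak_N :: "nat \<Rightarrow> nat" where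
  "frak_N n = frak_n n + frak_m n"

definition J_set :: "(real ^ 'n::finite) set \<Rightarrow> nat \<Rightarrow> real \<Rightarrow> (real ^ 'n) set \<Rightarrow> (real ^ 'n) set" where
  "J_set X k \<epsilon> Y =
     (\<Union>C \<in> dbscan_clusters k \<epsilon> Y. nbhd \<epsilon> (frak_n CARD('n)) (boundary_set X \<epsilon> C) \<inter> C)
     \<union> noise_points k \<epsilon> Y"

definition F_set :: "(real ^ 'n::finite) set \<Rightarrow> nat \<Rightarrow> real \<Rightarrow> (real ^ 'n) set \<Rightarrow> (real ^ 'n) set" where
  "F_set X k \<epsilon> Y =
     (\<Union>C \<in> dbscan_clusters k \<epsilon> Y. nbhd \<epsilon> (frak_N CARD('n)) (boundary_set X \<epsilon> C) \<inter> C)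
     \<union> noise_points k \<epsilon> Y"

end

theory Submission
  imports Defs
begin

text \<open>Reachability depends on the point set only through the core distances of \<open>p\<close> and \<open>q\<close>,
  so it suffices that every point \<open>y\<close> of \<open>Y\<close> within the \<open>k\<close>-th neighbour distance of a point
  \<open>z \<in> J\<close> lies in \<open>F\<close>. Noise points do. If \<open>z\<close> lies in a cluster \<open>C\<close> within \<open>frak_n\<close> cubes of
  \<open>\<partial>C\<close>, it is a core point, so its core distance is at most \<open>\<epsilon>\<close>; a core point \<open>y\<close> that close
  is in \<open>C\<close> and within \<open>frak_n + frak_m\<close> cubes of \<open>\<partial>C\<close>. If \<open>z\<close> is noise and the core point \<open>y\<close>
  of cluster \<open>C\<close> were more than \<open>frak_N\<close> cubes away from \<open>\<partial>C\<close>, then all cubes around \<open>y\<close>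
  within \<open>frak_N + 1\<close> steps would meet \<open>C\<close>, and \<open>z \<notin> C\<close> forces the cube of \<open>z\<close> to be more
  than \<open>frak_N + 1\<close> steps away from that of \<open>y\<close> in some coordinate. The cube of that
  neighbourhood nearest to \<open>z\<close> then contains a core point \<open>c\<close> with
  \<open>d(z, c) + \<epsilon> < d(z, y)\<close>, and the \<open>\<epsilon>\<close>-ball around \<open>c\<close> would give \<open>z\<close> at least \<open>k\<close>
  neighbours strictly closer than \<open>y\<close>, contradicting the choice of \<open>y\<close>.\<close>

section \<open>Core distances\<close>

lemma sorted_nth_le_iff_length_filter:
  fixes L :: "'a::linorder list"
  assumes "sorted L" "1 \<le> k" "k \<le> length L"
  shows "L ! (k - 1) \<le> r \<longleftrightarrow> k \<le> length (filter (\<lambda>x. x \<le> r) L)"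
proof
  assume le: "L ! (k - 1) \<le> r"
  have "{0..<k} \<subseteq> {i. i < length L \<and> L ! i \<le> r}"
  proof
    fix i assume "i \<in> {0..<k}"
    then have "i \<le> k - 1" "k - 1 < length L" using assms by auto
    with assms(1) le show "i \<in> {i. i < length L \<and> L ! i \<le> r}"
      using sorted_nth_mono[of L i "k - 1"] by auto
  qed
  then have "card {0..<k} \<le> card {i. i < length L \<and> L ! i \<le> r}"
    by (intro card_mono) auto
  then show "k \<le> length (filter (\<lambda>x. x \<le> r) L)"
    by (simp add: length_filter_conv_card)
next
  assume k_le: "k \<le> length (filter (\<lambda>x. x \<le> r) L)"
  show "L ! (k - 1) \<le> r"
  proof (rule ccontr)
    assume gt: "\<not> L ! (k - 1) \<le> r"
    have "{i. i < length L \<and> L ! i \<le> r} \<subseteq> {0..<k - 1}"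
    proof
      fix i assume i: "i \<in> {i. i < length L \<and> L ! i \<le> r}"
      show "i \<in> {0..<k - 1}"
      proof (rule ccontr)
        assume "i \<notin> {0..<k - 1}"
        then have "L ! (k - 1) \<le> L ! i"
          using assms(1) i by (simp add: sorted_nth_mono)
        with i gt show False by auto
      qed
    qed
    then have "card {i. i < length L \<and> L ! i \<le> r} \<le> k - 1"
      using card_mono[of "{0..<k - 1}"] by fastforce
    with k_le assms(2) show False by (simp add: length_filter_conv_card)
  qed
qed

lemma length_filter_sorted_dists:
  fixes Z :: "'a::metric_space set"
  assumes "finite Z"
  shows "length (filter (\<lambda>x. x \<le> r)
            (sorted_list_of_multiset (image_mset (dist p) (mset_set (Z - {p})))))
     = card {z \<in> Z - {p}. dist p z \<le> r}"
proof -
  let ?M = "image_mset (dist p) (mset_set (Z - {p}))"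
  have "length (filter (\<lambda>x. x \<le> r) (sorted_list_of_multiset ?M))
      = size (filter_mset (\<lambda>x. x \<le> r) ?M)"
    by (metis mset_filter mset_sorted_list_of_multiset size_mset)
  also have "\<dots> = size (mset_set {z \<in> Z - {p}. dist p z \<le> r})"
    using assms by (simp add: filter_mset_image_mset filter_mset_mset_set)
  finally show ?thesis by simp
qed

lemma core_dist_le_ereal_iff:
  fixes Z :: "'a::metric_space set"
  assumes "finite Z" "k \<noteq> 0"
  shows "core_dist k Z p \<le> ereal r \<longleftrightarrow> k \<le> card {z \<in> Z - {p}. dist p z \<le> r}"
proof -
  let ?L = "sorted_list_of_multiset (image_mset (dist p) (mset_set (Z - {p})))"
  have len: "length ?L = card (Z - {p})"
    by (metis mset_sorted_list_of_multiset size_image_mset size_mset size_mset_set)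
  show ?thesis
  proof (cases "k \<le> length ?L")
    case True
    then show ?thesis
      using assms sorted_nth_le_iff_length_filter[of ?L k r] length_filter_sorted_dists[OF assms(1)]
      by (simp add: core_dist_def Let_def)
  next
    case False
    moreover have "card {z \<in> Z - {p}. dist p z \<le> r} \<le> card (Z - {p})"
      using assms by (intro card_mono) auto
    ultimately show ?thesis
      using assms len by (simp add: core_dist_def Let_def)
  qed
qed

lemma core_dist_neq_minf [simp]: "core_dist k Z p \<noteq> -\<infinity>"
  by (simp add: core_dist_def Let_def)

lemma core_dist_eq_if_ball_subset:
  fixes Y F :: "'a::metric_space set"
  assumes "finite Y" "F \<subseteq> Y"
    and ball: "\<And>y. y \<in> Y - {p} \<Longrightarrow> ereal (dist p y) \<le> core_dist k Y p \<Longrightarrow> y \<in> F"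
  shows "core_dist k F p = core_dist k Y p"
proof (cases "k = 0")
  case True
  then show ?thesis by (simp add: core_dist_def)
next
  case False
  have "finite F" using finite_subset[OF assms(2,1)] .
  show ?thesis
  proof (rule antisym; rule ereal_le_real)
    fix r assume "core_dist k Y p \<le> ereal r"
    then obtain r0 where r0: "core_dist k Y p = ereal r0" "r0 \<le> r"
      by (cases "core_dist k Y p") auto
    then have "k \<le> card {z \<in> Y - {p}. dist p z \<le> r0}"
      using core_dist_le_ereal_iff[OF assms(1) False, of p r0] by simp
    also have "\<dots> \<le> card {z \<in> F - {p}. dist p z \<le> r}"
      using \<open>finite F\<close> ball r0 by (intro card_mono) auto
    finally show "core_dist k F p \<le> ereal r"
      using core_dist_le_ereal_iff[OF \<open>finite F\<close> False] by simp
  next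
    fix r assume "core_dist k F p \<le> ereal r"
    then have "k \<le> card {z \<in> F - {p}. dist p z \<le> r}"
      using core_dist_le_ereal_iff[OF \<open>finite F\<close> False] by simp
    also have "\<dots> \<le> card {z \<in> Y - {p}. dist p z \<le> r}"
      using assms(1,2) by (intro card_mono) auto
    finally show "core_dist k Y p \<le> ereal r"
      using core_dist_le_ereal_iff[OF assms(1) False] by simp
  qed
qed

lemma core_dist_le_dist_core_point:
  fixes Y :: "'a::metric_space set"
  assumes "finite Y" "c \<in> core_points k \<epsilon> Y"
  shows "core_dist k Y z \<le> ereal (dist z c + \<epsilon>)"
proof -
  let ?B = "{y \<in> Y. dist c y \<le> \<epsilon>}"
  have "k < card ?B" using assms(2) by (simp add: core_points_def)
  then have "?B \<noteq> {}" by (metis card.empty not_less0)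
  then have "\<epsilon> \<ge> 0" by (auto intro: order_trans[OF zero_le_dist])
  show ?thesis
  proof (cases "k = 0")
    case True
    then show ?thesis using \<open>\<epsilon> \<ge> 0\<close> by (simp add: core_dist_def)
  next
    case False
    have "k \<le> card (?B - {z})"
      using \<open>k < card ?B\<close> assms(1) by (auto simp add: card_Diff_singleton_if)
    also have "\<dots> \<le> card {y \<in> Y - {z}. dist z y \<le> dist z c + \<epsilon>}"
      using assms(1) dist_triangle[of z _ c] by (intro card_mono) (auto intro: order_trans add_left_mono)
    finally show ?thesis using core_dist_le_ereal_iff[OF assms(1) False] by simp
  qed
qed

section \<open>DBSCAN* clusters\<close>

lemma dbscan_clusters_subset_core_points:
  "C \<in> dbscan_clusters k \<epsilon> Y \<Longrightarrow> C \<subseteq> core_points k \<epsilon> Y"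
proof
  fix x assume "C \<in> dbscan_clusters k \<epsilon> Y" "x \<in> C"
  then obtain p where p: "p \<in> core_points k \<epsilon> Y" "(p, x) \<in> (eps_edges k \<epsilon> Y)\<^sup>*"
    unfolding dbscan_clusters_def by auto
  from p(2) show "x \<in> core_points k \<epsilon> Y"
    by (induction rule: rtrancl_induct) (use p(1) in \<open>auto simp: eps_edges_def\<close>)
qed

lemma dbscan_cluster_of_core_point:
  "y \<in> core_points k \<epsilon> Y \<Longrightarrow> {q. (y, q) \<in> (eps_edges k \<epsilon> Y)\<^sup>*} \<in> dbscan_clusters k \<epsilon> Y"
  unfolding dbscan_clusters_def by auto

lemma dbscan_cluster_closed:
  assumes "C \<in> dbscan_clusters k \<epsilon> Y" "p \<in> C" "y \<in> core_points k \<epsilon> Y" "dist p y \<le> \<epsilon>"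
  shows "y \<in> C"
proof (cases "p = y")
  case False
  obtain c where c: "C = {q. (c, q) \<in> (eps_edges k \<epsilon> Y)\<^sup>*}"
    using assms(1) unfolding dbscan_clusters_def by auto
  have "p \<in> core_points k \<epsilon> Y" using dbscan_clusters_subset_core_points[OF assms(1)] assms(2) by auto
  then have "(p, y) \<in> eps_edges k \<epsilon> Y" using assms False unfolding eps_edges_def by auto
  then show ?thesis using assms(2) c by (auto intro: rtrancl_into_rtrancl)
qed (use assms in simp)

lemma F_set_subset: "F_set X k \<epsilon> Y \<subseteq> Y"
  unfolding F_set_def noise_points_def
  using dbscan_clusters_subset_core_points core_points_def by fastforce

lemma J_set_subset: "J_set X k \<epsilon> Y \<subseteq> Y"
  unfolding J_set_def noise_points_def
  using dbscan_clusters_subset_core_points core_points_def by fastforce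

section \<open>Grid cubes\<close>

definition cube_index :: "real \<Rightarrow> real ^ 'n::finite \<Rightarrow> 'n \<Rightarrow> int" where
  "cube_index \<epsilon> x i = \<lfloor>x $ i / cube_side \<epsilon> CARD('n)\<rfloor>"

lemma cube_side_pos: "\<epsilon> > 0 \<Longrightarrow> cube_side \<epsilon> CARD('n::finite) > 0"
  unfolding cube_side_def by simp

lemma mem_grid_cube_iff:
  fixes x :: "real ^ 'n::finite"
  shows "x \<in> grid_cube \<epsilon> j \<longleftrightarrow>
    (\<forall>i. of_int (j i) * cube_side \<epsilon> CARD('n) \<le> x $ i
       \<and> x $ i \<le> of_int (j i) * cube_side \<epsilon> CARD('n) + cube_side \<epsilon> CARD('n))"
  by (simp add: grid_cube_def distrib_right)

lemma floor_divide_mult_bounds: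
  fixes s y :: real
  assumes "s > 0"
  shows "of_int \<lfloor>y / s\<rfloor> * s \<le> y" "y < of_int \<lfloor>y / s\<rfloor> * s + s"
proof -
  have "of_int \<lfloor>y / s\<rfloor> \<le> y / s" "y / s < of_int \<lfloor>y / s\<rfloor> + 1" by linarith+
  then have "of_int \<lfloor>y / s\<rfloor> * s \<le> (y / s) * s" "(y / s) * s < (of_int \<lfloor>y / s\<rfloor> + 1) * s"
    using assms by (intro mult_right_mono mult_strict_right_mono; simp)+
  then show "of_int \<lfloor>y / s\<rfloor> * s \<le> y" "y < of_int \<lfloor>y / s\<rfloor> * s + s"
    using assms by (simp_all add: algebra_simps)
qed

lemma mem_grid_cube_index:
  fixes x :: "real ^ 'n::finite"
  assumes "\<epsilon> > 0"
  shows "x \<in> grid_cube \<epsilon> (cube_index \<epsilon> x)"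
proof -
  have "cube_side \<epsilon> CARD('n) > 0" using assms by (rule cube_side_pos)
  then show ?thesis
    using floor_divide_mult_bounds by (auto simp: mem_grid_cube_iff cube_index_def less_imp_le)
qed

lemma abs_diff_clamp_le:
  fixes s x :: real and j j' :: int
  assumes "s > 0" "of_int j * s \<le> x" "x \<le> of_int j * s + s" "\<bar>j' - j\<bar> \<le> M"
  shows "\<bar>x - max (of_int j' * s) (min (of_int j' * s + s) x)\<bar> \<le> of_int M * s"
proof -
  have "of_int \<bar>j' - j\<bar> * s \<le> of_int M * s" using assms by (intro mult_right_mono) auto
  then have M: "\<bar>of_int j' - of_int j\<bar> * s \<le> of_int M * s" by simp
  consider "x < of_int j' * s" | "of_int j' * s + s < x" | "of_int j' * s \<le> x" "x \<le> of_int j' * s + s"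
    by linarith
  then show ?thesis
  proof cases
    case 1
    then have "of_int j * s < of_int j' * s" using assms(2) by linarith
    then have "j < j'" using assms(1) by (simp add: mult_less_cancel_right)
    then show ?thesis using 1 M assms by (auto simp: algebra_simps abs_if split: if_splits)
  next
    case 2
    then have "of_int j' * s < of_int j * s" using assms(3) by linarith
    then have "j' < j" using assms(1) by (simp add: mult_less_cancel_right)
    then show ?thesis using 2 M assms by (auto simp: algebra_simps abs_if split: if_splits)
  next
    case 3
    then show ?thesis using assms(1,4) by (simp add: max_def min_def)
  qed
qed

lemma grid_cube_subset_thicken:
  fixes j j' :: "'n::finite \<Rightarrow> int"
  assumes "\<epsilon> > 0" "\<forall>i. \<bar>j' i - j i\<bar> \<le> int M"
  shows "grid_cube \<epsilon> j \<subseteq> thicken \<epsilon> M (grid_cube \<epsilon> j')"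
proof
  fix x assume x: "x \<in> grid_cube \<epsilon> j"
  let ?s = "cube_side \<epsilon> CARD('n)"
  have s: "?s > 0" using cube_side_pos assms(1) by blast
  define c where "c = (\<chi> i. max (of_int (j' i) * ?s) (min (of_int (j' i) * ?s + ?s) (x $ i)))"
  have "c \<in> grid_cube \<epsilon> j'"
    unfolding mem_grid_cube_iff c_def using s by auto
  moreover have "\<bar>x $ i - c $ i\<bar> \<le> real M * ?s" for i
    using abs_diff_clamp_le[OF s _ _ assms(2)[rule_format, of i]] x
    unfolding c_def mem_grid_cube_iff by simp
  ultimately show "x \<in> thicken \<epsilon> M (grid_cube \<epsilon> j')"
    unfolding thicken_def by blast
qed

lemma interior_cube_neighbour_meets:
  assumes "\<epsilon> > 0" "interior_cube X \<epsilon> C (grid_cube \<epsilon> j)" "\<forall>i. \<bar>j' i - j i\<bar> \<le> 1"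
  shows "grid_cube \<epsilon> j' \<inter> C \<noteq> {}"
proof -
  have "\<forall>i. \<bar>j i - j' i\<bar> \<le> int 1"
    using assms(3) by (simp add: abs_minus_commute)
  then have "grid_cube \<epsilon> j' \<subseteq> thicken \<epsilon> 1 (grid_cube \<epsilon> j)"
    by (rule grid_cube_subset_thicken[OF assms(1)])
  then show ?thesis
    using assms(2) unfolding interior_cube_def meet_cubes_def cubes_def by blast
qed

lemma exists_index_between:
  fixes j j'' :: "'n \<Rightarrow> int"
  assumes "\<forall>i. \<bar>j'' i - j i\<bar> \<le> int d + 1"
  obtains j' where "\<forall>i. \<bar>j' i - j i\<bar> \<le> int d" "\<forall>i. \<bar>j'' i - j' i\<bar> \<le> 1"
proof -
  define j' where "j' i = j i + max (- int d) (min (int d) (j'' i - j i))" for i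
  have "\<bar>j' i - j i\<bar> \<le> int d" "\<bar>j'' i - j' i\<bar> \<le> 1" for i
    using assms[rule_format, of i] unfolding j'_def by (auto simp: abs_if max_def min_def)
  then show thesis using that by blast
qed

lemma interior_cube_if_off_boundary_nbhd:
  fixes X C :: "(real ^ 'n::finite) set"
  assumes "\<epsilon> > 0" "y \<notin> nbhd \<epsilon> M (boundary_set X \<epsilon> C)"
    and "\<forall>i. \<bar>j i - cube_index \<epsilon> y i\<bar> \<le> int M" "grid_cube \<epsilon> j \<inter> C \<noteq> {}"
  shows "interior_cube X \<epsilon> C (grid_cube \<epsilon> j)"
proof (rule ccontr)
  assume "\<not> interior_cube X \<epsilon> C (grid_cube \<epsilon> j)"
  with assms(4) have "grid_cube \<epsilon> j \<in> meet_cubes \<epsilon> (boundary_set X \<epsilon> C)"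
    unfolding boundary_set_def meet_cubes_def cubes_def by blast
  moreover have "y \<in> thicken \<epsilon> M (grid_cube \<epsilon> j)"
    using grid_cube_subset_thicken[OF assms(1,3)] mem_grid_cube_index[OF assms(1)] by blast
  ultimately show False
    using assms(2) unfolding nbhd_def by blast
qed

text \<open>Induction on the index distance: a cube within \<open>M\<close> steps of the cube of \<open>y\<close> that meets
  \<open>C\<close> is interior, so all its neighbours meet \<open>C\<close> too.\<close>

lemma grid_cube_meets_if_off_boundary_nbhd:
  fixes X C :: "(real ^ 'n::finite) set"
  assumes "\<epsilon> > 0" "y \<in> C" "y \<notin> nbhd \<epsilon> M (boundary_set X \<epsilon> C)"
    and "\<forall>i. \<bar>j i - cube_index \<epsilon> y i\<bar> \<le> int M + 1"
  shows "grid_cube \<epsilon> j \<inter> C \<noteq> {}"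
proof -
  have "\<forall>j. (\<forall>i. \<bar>j i - cube_index \<epsilon> y i\<bar> \<le> int d) \<longrightarrow> grid_cube \<epsilon> j \<inter> C \<noteq> {}"
    if "d \<le> M + 1" for d
    using that
  proof (induction d)
    case 0
    then show ?case
      using mem_grid_cube_index[OF assms(1), of y] assms(2) by (auto simp: fun_eq_iff)
  next
    case (Suc d)
    show ?case
    proof (intro allI impI)
      fix j assume "\<forall>i. \<bar>j i - cube_index \<epsilon> y i\<bar> \<le> int (Suc d)"
      then have "\<forall>i. \<bar>j i - cube_index \<epsilon> y i\<bar> \<le> int d + 1" by (simp add: add.commute)
      then obtain j' where j': "\<forall>i. \<bar>j' i - cube_index \<epsilon> y i\<bar> \<le> int d" "\<forall>i. \<bar>j i - j' i\<bar> \<le> 1"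
        by (rule exists_index_between)
      have "grid_cube \<epsilon> j' \<inter> C \<noteq> {}" using Suc j'(1) by simp
      moreover have "\<forall>i. \<bar>j' i - cube_index \<epsilon> y i\<bar> \<le> int M"
      proof
        fix i
        have "int d \<le> int M" using Suc.prems by simp
        then show "\<bar>j' i - cube_index \<epsilon> y i\<bar> \<le> int M" using j'(1) order_trans by blast
      qed
      ultimately have "interior_cube X \<epsilon> C (grid_cube \<epsilon> j')"
        using interior_cube_if_off_boundary_nbhd assms(1,3) by blast
      then show "grid_cube \<epsilon> j \<inter> C \<noteq> {}"
        using interior_cube_neighbour_meets assms(1) j'(2) by blast
    qed
  qed
  from this[of "M + 1"] assms(4) show ?thesis by (simp add: add.commute)
qed

lemma far_cube_index_if_off_boundary_nbhd:
  fixes X C :: "(real ^ 'n::finite) set"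
  assumes "\<epsilon> > 0" "z \<in> X" "z \<notin> C" "y \<in> C" "y \<notin> nbhd \<epsilon> M (boundary_set X \<epsilon> C)"
  obtains i where "int M + 1 < \<bar>cube_index \<epsilon> z i - cube_index \<epsilon> y i\<bar>"
proof -
  have "\<exists>i. int M + 1 < \<bar>cube_index \<epsilon> z i - cube_index \<epsilon> y i\<bar>"
  proof (rule ccontr)
    assume "\<nexists>i. int M + 1 < \<bar>cube_index \<epsilon> z i - cube_index \<epsilon> y i\<bar>"
    then have "\<forall>i. \<bar>cube_index \<epsilon> z i - cube_index \<epsilon> y i\<bar> \<le> int M + 1" by (auto simp: not_less)
    then obtain j where j: "\<forall>i. \<bar>j i - cube_index \<epsilon> y i\<bar> \<le> int M" "\<forall>i. \<bar>cube_index \<epsilon> z i - j i\<bar> \<le> 1"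
      by (rule exists_index_between)
    have "\<forall>i. \<bar>j i - cube_index \<epsilon> y i\<bar> \<le> int M + 1"
      using j(1) by (metis add_increasing2 zero_le_one)
    then have "grid_cube \<epsilon> j \<inter> C \<noteq> {}"
      by (rule grid_cube_meets_if_off_boundary_nbhd[OF assms(1,4,5)])
    then have "interior_cube X \<epsilon> C (grid_cube \<epsilon> j)"
      using interior_cube_if_off_boundary_nbhd[OF assms(1,5) j(1)] by blast
    moreover have "\<forall>i. \<bar>j i - cube_index \<epsilon> z i\<bar> \<le> int 1"
      using j(2) by (simp add: abs_minus_commute)
    then have "z \<in> thicken \<epsilon> 1 (grid_cube \<epsilon> j)"
      using grid_cube_subset_thicken[OF assms(1)] mem_grid_cube_index[OF assms(1)] by blast
    ultimately show False
      using assms(2,3) unfolding interior_cube_def by blast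
  qed
  then show thesis using that by blast
qed

lemma clamped_index_coord_bound:
  fixes s y p c :: real and J P jt :: int and M :: nat
  assumes s: "s > 0" and J: "J = \<lfloor>y / s\<rfloor>" and P: "P = \<lfloor>p / s\<rfloor>"
    and jt: "jt = J + max (- (int M + 1)) (min (int M + 1) (P - J))"
    and c1: "of_int jt * s \<le> c" and c2: "c \<le> of_int jt * s + s"
  shows "\<bar>p - c\<bar> \<le> max (\<bar>p - y\<bar> - real M * s) s"
    and "int M + 1 < \<bar>P - J\<bar> \<Longrightarrow> \<bar>p - c\<bar> \<le> \<bar>p - y\<bar> - real M * s \<and> (real M + 1) * s < \<bar>p - y\<bar>"
proof -
  have y1: "of_int J * s \<le> y" and y2: "y < of_int J * s + s"
    using floor_divide_mult_bounds[OF s, of y] J by auto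
  have p1: "of_int P * s \<le> p" and p2: "p < of_int P * s + s"
    using floor_divide_mult_bounds[OF s, of p] P by auto
  have far: "\<bar>p - c\<bar> \<le> \<bar>p - y\<bar> - real M * s \<and> (real M + 1) * s < \<bar>p - y\<bar>"
    if "int M + 1 < \<bar>P - J\<bar>"
  proof -
    from that consider "int M + 1 < P - J" | "P - J < - (int M + 1)" by linarith
    then show ?thesis
    proof cases
      case 1
      then have jt_eq: "jt = J + int M + 1" using jt by simp
      have "of_int jt * s = of_int J * s + real M * s + s" by (subst jt_eq) (simp add: algebra_simps)
      moreover have "of_int (J + int M + 2) * s \<le> of_int P * s"
        using 1 s by (intro mult_right_mono) auto
      ultimately show ?thesis using c1 c2 y1 y2 p1 p2 s by (auto simp: algebra_simps abs_if)
    next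
      case 2
      then have jt_eq: "jt = J - int M - 1" using jt by simp
      have "of_int jt * s = of_int J * s - real M * s - s" by (subst jt_eq) (simp add: algebra_simps)
      moreover have "of_int (P + 1) * s \<le> of_int (J - int M - 1) * s"
        using 2 s by (intro mult_right_mono) auto
      ultimately show ?thesis using c1 c2 y1 y2 p1 p2 s by (auto simp: algebra_simps abs_if)
    qed
  qed
  then show "int M + 1 < \<bar>P - J\<bar> \<Longrightarrow> \<bar>p - c\<bar> \<le> \<bar>p - y\<bar> - real M * s \<and> (real M + 1) * s < \<bar>p - y\<bar>" .
  show "\<bar>p - c\<bar> \<le> max (\<bar>p - y\<bar> - real M * s) s"
  proof (cases "int M + 1 < \<bar>P - J\<bar>")
    case True
    then show ?thesis using far by fastforce
  next
    case False
    then have "jt = P" using jt by (simp add: abs_if split: if_splits)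
    then show ?thesis using c1 c2 p1 p2 by (auto simp: abs_if)
  qed
qed

section \<open>Euclidean estimates\<close>

lemma pos_part_diff_le_scaled:
  fixes a t R :: real
  assumes "0 \<le> a" "a \<le> R" "0 \<le> t" "t < R"
  shows "max (a - t) 0 \<le> a * (1 - t / R)"
proof (cases "a \<le> t")
  case True
  then show ?thesis using assms by (simp add: max_def)
next
  case False
  have "a * (t / R) \<le> R * (t / R)"
    using assms by (intro mult_right_mono) auto
  then have "a * (t / R) \<le> t" using assms by simp
  then show ?thesis using False by (simp add: algebra_simps max_def)
qed

lemma sum_squares_shrink_le:
  fixes a b :: "'n::finite \<Rightarrow> real" and t s R :: real
  assumes s: "s > 0" and a0: "\<And>i. 0 \<le> a i" and b0: "\<And>i. 0 \<le> b i"
    and b: "\<And>i. b i \<le> max (a i - t) s" and b_i0: "b i0 \<le> a i0 - t"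
    and a_i0: "t + s < a i0" and t0: "t \<ge> 0"
    and R: "R = sqrt (\<Sum>i\<in>UNIV. (a i)\<^sup>2)"
  shows "(\<Sum>i\<in>UNIV. (b i)\<^sup>2) \<le> (R - t)\<^sup>2 + (real CARD('n) - 1) * s\<^sup>2"
proof -
  have a_le: "a i \<le> R" for i
    unfolding R by (rule real_le_rsqrt) (rule member_le_sum; simp)
  have Rt: "t < R" using a_le[of i0] a_i0 s by linarith
  have each: "(b i)\<^sup>2 \<le> (a i)\<^sup>2 * (1 - t / R)\<^sup>2 + (if i = i0 then 0 else s\<^sup>2)" for i
  proof -
    have "(b i)\<^sup>2 \<le> (max (a i - t) 0)\<^sup>2 + (if i = i0 then 0 else s\<^sup>2)"
    proof (cases "b i \<le> max (a i - t) 0")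
      case True
      then have "(b i)\<^sup>2 \<le> (max (a i - t) 0)\<^sup>2" using b0 by (intro power_mono)
      then show ?thesis by (intro add_increasing2) auto
    next
      case False
      then have "i \<noteq> i0" "b i \<le> s" using b[of i] b_i0 by (auto simp: max_def split: if_splits)
      then have "(b i)\<^sup>2 \<le> s\<^sup>2" using b0 by (intro power_mono) auto
      then show ?thesis using \<open>i \<noteq> i0\<close> by (simp add: add_increasing)
    qed
    also have "(max (a i - t) 0)\<^sup>2 \<le> (a i * (1 - t / R))\<^sup>2"
      using pos_part_diff_le_scaled[OF a0 a_le t0 Rt] by (intro power_mono) auto
    finally show ?thesis by (simp add: power_mult_distrib)
  qed
  have "(\<Sum>i\<in>UNIV. (b i)\<^sup>2)
      \<le> (\<Sum>i\<in>UNIV. (a i)\<^sup>2 * (1 - t / R)\<^sup>2 + (if i = i0 then 0 else s\<^sup>2))"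
    by (rule sum_mono) (rule each)
  also have "\<dots> = (\<Sum>i\<in>UNIV. (a i)\<^sup>2) * (1 - t / R)\<^sup>2 + (\<Sum>i\<in>UNIV - {i0}. s\<^sup>2)"
    by (simp add: sum.distrib sum_distrib_right sum.If_cases Compl_eq_Diff_UNIV)
  also have "(\<Sum>i\<in>UNIV. (a i)\<^sup>2) = R\<^sup>2" unfolding R by (simp add: sum_nonneg)
  also have "R\<^sup>2 * (1 - t / R)\<^sup>2 = (R - t)\<^sup>2"
    using Rt t0 by (simp add: power2_eq_square field_simps)
  also have "(\<Sum>i\<in>UNIV - {i0}. s\<^sup>2) = (real CARD('n) - 1) * s\<^sup>2"
    by (simp add: of_nat_diff Suc_leI)
  finally show ?thesis .
qed

lemma square_shrink_lt:
  fixes q s t R :: real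
  assumes "q > 1" "s > 0" "3 * q * s - s \<le> t" "t + s < R"
  shows "(R - t)\<^sup>2 + (q\<^sup>2 - 1) * s\<^sup>2 < (R - 2 * q * s)\<^sup>2"
proof -
  define d where "d = t - 2 * q * s"
  have d1: "(q - 1) * s \<le> d" using assms(3) unfolding d_def by (simp add: algebra_simps)
  have "0 < (q - 1) * s" using assms(1,2) by simp
  with d1 have d0: "d > 0" by linarith
  have "(R - t)\<^sup>2 = (R - 2 * q * s)\<^sup>2 - 2 * d * (R - 2 * q * s) + d\<^sup>2"
    unfolding d_def by (simp add: power2_eq_square algebra_simps)
  moreover have "2 * d * (d + s) < 2 * d * (R - 2 * q * s)"
    using assms(4) d0 unfolding d_def by simp
  moreover have "((q - 1) * s) * ((q - 1) * s + 2 * s) \<le> d * (d + 2 * s)"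
    using d1 d0 assms(1,2) by (intro mult_mono add_mono) auto
  moreover have "((q - 1) * s) * ((q - 1) * s + 2 * s) = (q\<^sup>2 - 1) * s\<^sup>2"
    by (simp add: power2_eq_square algebra_simps)
  ultimately show ?thesis by (simp add: power2_eq_square algebra_simps)
qed

lemma frak_N_ge: "3 * sqrt (real n) - 1 \<le> real (frak_N n)"
proof -
  have "sqrt (real n) - 1 \<le> real (frak_n n)"
    unfolding frak_n_def by (rule real_nat_ceiling_ge)
  moreover have "2 * sqrt (real n) \<le> real (frak_m n)"
    unfolding frak_m_def by (rule real_nat_ceiling_ge)
  ultimately show ?thesis unfolding frak_N_def by simp
qed

lemma dist_vec_eq_sqrt_sum:
  fixes z y :: "real ^ 'n::finite"
  shows "dist z y = sqrt (\<Sum>i\<in>UNIV. \<bar>z $ i - y $ i\<bar>\<^sup>2)"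
  unfolding dist_vec_def L2_set_def dist_real_def by (rule refl)

text \<open>Pythagoras, not the triangle inequality: the coordinates where \<open>c\<close> is only known to be
  within one cube side of \<open>z\<close> contribute \<open>(n - 1) s\<^sup>2\<close> in total, and
  \<open>frak_N \<ge> 3 sqrt n - 1\<close> is just enough to absorb this.\<close>

lemma dist_add_lt_of_coordinate_bounds:
  fixes z y c :: "real ^ 'n::finite" and \<epsilon> :: real
  defines "s \<equiv> cube_side \<epsilon> CARD('n)" and "N \<equiv> frak_N CARD('n)"
  assumes n2: "CARD('n) \<ge> 2" and e: "\<epsilon> > 0"
    and coord: "\<And>i. \<bar>z $ i - c $ i\<bar> \<le> max (\<bar>z $ i - y $ i\<bar> - real N * s) s"
    and coord_i0: "\<bar>z $ i0 - c $ i0\<bar> \<le> \<bar>z $ i0 - y $ i0\<bar> - real N * s"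
    and far_i0: "(real N + 1) * s < \<bar>z $ i0 - y $ i0\<bar>"
  shows "dist z c + \<epsilon> < dist z y"
proof -
  define q where "q = sqrt (real CARD('n))"
  define R where "R = dist z y"
  have s0: "s > 0" unfolding s_def using e by (rule cube_side_pos)
  have q1: "q > 1" unfolding q_def using n2 by simp
  have qs: "q * s > 0" using q1 s0 by simp
  have eps: "\<epsilon> = 2 * q * s" using q1 unfolding s_def cube_side_def q_def by simp
  have R: "R = sqrt (\<Sum>i\<in>UNIV. \<bar>z $ i - y $ i\<bar>\<^sup>2)"
    unfolding R_def by (rule dist_vec_eq_sqrt_sum)
  have a_le: "\<bar>z $ i0 - y $ i0\<bar> \<le> R"
    unfolding R by (rule real_le_rsqrt) (rule member_le_sum; simp)
  have a_gt: "real N * s + s < \<bar>z $ i0 - y $ i0\<bar>"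
    using far_i0 by (simp add: distrib_right)
  have "(3 * q - 1) * s \<le> real N * s"
    using frak_N_ge s0 unfolding N_def q_def by (intro mult_right_mono) auto
  then have N: "3 * q * s - s \<le> real N * s" by (simp add: algebra_simps)
  have "(dist z c)\<^sup>2 = (\<Sum>i\<in>UNIV. \<bar>z $ i - c $ i\<bar>\<^sup>2)"
    using dist_vec_eq_sqrt_sum[of z c] by (simp add: sum_nonneg)
  also have "\<dots> \<le> (R - real N * s)\<^sup>2 + (real CARD('n) - 1) * s\<^sup>2"
    using s0 by (intro sum_squares_shrink_le[OF s0 abs_ge_zero abs_ge_zero coord coord_i0 a_gt _ R]) simp
  also have "\<dots> = (R - real N * s)\<^sup>2 + (q\<^sup>2 - 1) * s\<^sup>2"
    unfolding q_def by simp
  also have "\<dots> < (R - \<epsilon>)\<^sup>2"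
    unfolding eps using a_le a_gt by (intro square_shrink_lt[OF q1 s0 N]) linarith
  finally have "(dist z c)\<^sup>2 < (R - \<epsilon>)\<^sup>2" .
  moreover have "0 \<le> R - \<epsilon>"
    using a_le a_gt N qs eps by linarith
  ultimately have "dist z c < R - \<epsilon>"
    by (rule power_less_imp_less_base)
  then show ?thesis unfolding R_def by simp
qed

lemma exists_closer_point_if_off_boundary_nbhd:
  fixes X C :: "(real ^ 'n::finite) set" and z y :: "real ^ 'n"
  assumes n2: "CARD('n) \<ge> 2" and e: "\<epsilon> > 0" and "z \<in> X" "z \<notin> C" "y \<in> C"
    and far: "y \<notin> nbhd \<epsilon> (frak_N CARD('n)) (boundary_set X \<epsilon> C)"
  obtains c where "c \<in> C" "dist z c + \<epsilon> < dist z y"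
proof -
  define N where "N = frak_N CARD('n)"
  define s where "s = cube_side \<epsilon> CARD('n)"
  let ?J = "cube_index \<epsilon> y" and ?P = "cube_index \<epsilon> z"
  obtain i0 where i0: "int N + 1 < \<bar>?P i0 - ?J i0\<bar>"
    using far_cube_index_if_off_boundary_nbhd[OF e assms(3-5) far] unfolding N_def by blast
  define jt where "jt i = ?J i + max (- (int N + 1)) (min (int N + 1) (?P i - ?J i))" for i
  have "\<forall>i. \<bar>jt i - ?J i\<bar> \<le> int N + 1" unfolding jt_def by auto
  then have "grid_cube \<epsilon> jt \<inter> C \<noteq> {}"
    using grid_cube_meets_if_off_boundary_nbhd[OF e assms(5) far] unfolding N_def by blast
  then obtain c where c: "c \<in> grid_cube \<epsilon> jt" "c \<in> C" by blast
  have s0: "s > 0" unfolding s_def using e by (rule cube_side_pos)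
  have "\<bar>z $ i - c $ i\<bar> \<le> max (\<bar>z $ i - y $ i\<bar> - real N * s) s
    \<and> (int N + 1 < \<bar>?P i - ?J i\<bar> \<longrightarrow>
         \<bar>z $ i - c $ i\<bar> \<le> \<bar>z $ i - y $ i\<bar> - real N * s \<and> (real N + 1) * s < \<bar>z $ i - y $ i\<bar>)"
    for i
  proof -
    have "?J i = \<lfloor>y $ i / s\<rfloor>" "?P i = \<lfloor>z $ i / s\<rfloor>"
      unfolding cube_index_def s_def by simp_all
    moreover have "of_int (jt i) * s \<le> c $ i" "c $ i \<le> of_int (jt i) * s + s"
      using c(1) unfolding mem_grid_cube_iff s_def by simp_all
    ultimately show ?thesis
      using clamped_index_coord_bound[OF s0 _ _ jt_def] by blast
  qed
  then have "dist z c + \<epsilon> < dist z y"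
    using dist_add_lt_of_coordinate_bounds[OF n2 e] i0 unfolding s_def N_def by blast
  with c(2) show thesis by (rule that)
qed

section \<open>Core distances in \<open>F\<close>\<close>

lemma mem_nbhd_frak_N_if_close:
  fixes x y :: "real ^ 'n::finite"
  assumes e: "\<epsilon> > 0" and x: "x \<in> nbhd \<epsilon> (frak_n CARD('n)) Z" and "dist x y \<le> \<epsilon>"
  shows "y \<in> nbhd \<epsilon> (frak_N CARD('n)) Z"
proof -
  let ?s = "cube_side \<epsilon> CARD('n)"
  from x obtain S w where S: "S \<in> meet_cubes \<epsilon> Z" "w \<in> S"
    and w: "\<forall>i. \<bar>x $ i - w $ i\<bar> \<le> real (frak_n CARD('n)) * ?s"
    unfolding nbhd_def thicken_def by blast
  have "?s > 0" using e by (rule cube_side_pos)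
  have "\<epsilon> = 2 * sqrt (real CARD('n)) * ?s" by (simp add: cube_side_def)
  also have "\<dots> \<le> real (frak_m CARD('n)) * ?s"
    using \<open>?s > 0\<close> real_nat_ceiling_ge unfolding frak_m_def by (intro mult_right_mono) auto
  finally have m: "\<epsilon> \<le> real (frak_m CARD('n)) * ?s" .
  have "\<bar>y $ i - w $ i\<bar> \<le> real (frak_N CARD('n)) * ?s" for i
  proof -
    have "\<bar>y $ i - x $ i\<bar> \<le> \<epsilon>"
      using dist_vec_nth_le[of y i x] assms(3) by (simp add: dist_real_def dist_commute)
    then show ?thesis
      using w[rule_format, of i] m unfolding frak_N_def by (simp add: distrib_right)
  qed
  then show ?thesis using S unfolding nbhd_def thicken_def by blast
qed

lemma core_point_in_F_set_near_cluster_point: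
  fixes X Y :: "(real ^ 'n::finite) set"
  assumes "finite Y" "\<epsilon> > 0" and C: "C \<in> dbscan_clusters k \<epsilon> Y" "z \<in> C"
    and z_near: "z \<in> nbhd \<epsilon> (frak_n CARD('n)) (boundary_set X \<epsilon> C)"
    and y_core: "y \<in> core_points k \<epsilon> Y" and y_near: "ereal (dist z y) \<le> core_dist k Y z"
  shows "y \<in> F_set X k \<epsilon> Y"
proof -
  have "z \<in> core_points k \<epsilon> Y"
    using dbscan_clusters_subset_core_points C by blast
  then have "core_dist k Y z \<le> ereal \<epsilon>"
    using core_dist_le_dist_core_point[OF assms(1), of z k \<epsilon> z] by simp
  then have "dist z y \<le> \<epsilon>" using y_near by (meson ereal_less_eq(3) order_trans)
  then have "y \<in> C" "y \<in> nbhd \<epsilon> (frak_N CARD('n)) (boundary_set X \<epsilon> C)"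
    using dbscan_cluster_closed[OF C y_core] mem_nbhd_frak_N_if_close[OF assms(2) z_near] by auto
  with C(1) show ?thesis unfolding F_set_def by blast
qed

lemma core_point_in_F_set_near_noise_point:
  fixes X Y :: "(real ^ 'n::finite) set"
  assumes "CARD('n) \<ge> 2" "finite Y" "\<epsilon> > 0" "z \<in> X"
    and z_noise: "z \<in> noise_points k \<epsilon> Y"
    and y_core: "y \<in> core_points k \<epsilon> Y" and y_near: "ereal (dist z y) \<le> core_dist k Y z"
  shows "y \<in> F_set X k \<epsilon> Y"
proof -
  define C where "C = {q. (y, q) \<in> (eps_edges k \<epsilon> Y)\<^sup>*}"
  have C: "C \<in> dbscan_clusters k \<epsilon> Y" "y \<in> C"
    using dbscan_cluster_of_core_point[OF y_core] unfolding C_def by auto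
  have C_core: "C \<subseteq> core_points k \<epsilon> Y"
    using dbscan_clusters_subset_core_points[OF C(1)] .
  have "y \<in> nbhd \<epsilon> (frak_N CARD('n)) (boundary_set X \<epsilon> C)"
  proof (rule ccontr)
    assume "y \<notin> nbhd \<epsilon> (frak_N CARD('n)) (boundary_set X \<epsilon> C)"
    moreover have "z \<notin> C" using z_noise C_core unfolding noise_points_def by blast
    ultimately obtain c where c: "c \<in> C" "dist z c + \<epsilon> < dist z y"
      using exists_closer_point_if_off_boundary_nbhd[OF assms(1,3,4) _ C(2)] by blast
    have "core_dist k Y z \<le> ereal (dist z c + \<epsilon>)"
      using core_dist_le_dist_core_point[OF assms(2)] c(1) C_core by blast
    with y_near c(2) show False
      by (meson ereal_less_eq(3) linorder_not_le order_trans)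
  qed
  with C show ?thesis unfolding F_set_def by blast
qed

lemma core_dist_F_set_eq:
  fixes X Y :: "(real ^ 'n::finite) set"
  assumes "CARD('n) \<ge> 2" "finite X" "Y \<subseteq> X" "\<epsilon> > 0" and z: "z \<in> J_set X k \<epsilon> Y"
  shows "core_dist k (F_set X k \<epsilon> Y) z = core_dist k Y z"
proof -
  have finY: "finite Y" using finite_subset[OF assms(3,2)] .
  have "z \<in> X" using z J_set_subset assms(3) by blast
  show ?thesis
  proof (rule core_dist_eq_if_ball_subset[OF finY F_set_subset])
    fix y assume y: "y \<in> Y - {z}" and y_near: "ereal (dist z y) \<le> core_dist k Y z"
    show "y \<in> F_set X k \<epsilon> Y"
    proof (cases "y \<in> core_points k \<epsilon> Y")
      case False
      with y show ?thesis unfolding F_set_def noise_points_def by blast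
    next
      case True
      from z consider (cluster) C where "C \<in> dbscan_clusters k \<epsilon> Y" "z \<in> C"
          "z \<in> nbhd \<epsilon> (frak_n CARD('n)) (boundary_set X \<epsilon> C)"
        | (noise) "z \<in> noise_points k \<epsilon> Y"
        unfolding J_set_def by blast
      then show ?thesis
      proof cases
        case cluster
        then show ?thesis
          using core_point_in_F_set_near_cluster_point[OF finY assms(4)] True y_near by blast
      next
        case noise
        then show ?thesis
          using core_point_in_F_set_near_noise_point[OF assms(1) finY assms(4) \<open>z \<in> X\<close>] True y_near
          by blast
      qed
    qed
  qed
qed

theorem lemma5p4:
  fixes X Y :: "(real ^ 'n::finite) set" and k :: nat and \<epsilon> :: real and p q :: "real ^ 'n"
  assumes "CARD('n) \<ge> 2"
    and "finite X"
    and "Y \<subseteq> X"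
    and "\<epsilon> > 0"
    and "p \<in> J_set X k \<epsilon> Y"
    and "q \<in> J_set X k \<epsilon> Y"
  shows "reach k (F_set X k \<epsilon> Y) p q = reach k Y p q"
  using core_dist_F_set_eq[OF assms(1-4,5)] core_dist_F_set_eq[OF assms(1-4,6)]
  by (simp add: reach_def)

end
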